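(* Let $\mathcal{H}^c_{A_{n-1}}$ be the degenerate affine Hecke–Clifford algebra of type $A_{n-1}$. If $\lambda$ is a partition of $n$ having at least one even part and $w\in S_n$ has cycle type $\lambda$, then $w\in[\mathcal{H}^c_{A_{n-1}},\mathcal{H}^c_{A_{n-1}}]$.
   Context: $\mathcal{H}^c_{A_{n-1}}$ (parameter $u\in\mathbb{C}$) is the $\mathbb{C}$-algebra generated by commuting $x_1,\dots,x_n$, Clifford generators $c_1,\dots,c_n$ ($c_i^2=1$, $c_ic_j=-c_jc_i$ for $i\ne j$) and $S_n$ (simple reflections $s_i=(i,i+1)$), with $\mathbb{C}[x]$, the Clifford algebra and $\mathbb{C}S_n$ subalgebras and relations $x_ic_i=-c_ix_i$, $x_ic_j=c_jx_i$ ($i\ne j$), $\sigma c_i=c_{\sigma(i)}\sigma$ ($\sigma\in S_n$), $x_{i+1}s_i-s_ix_i=u(1-c_{i+1}c_i)$, $x_js_i=s_ix_j$ ($j\ne i,i+1$). $[H,H]$ is the linear span of all $hh'-h'h$. *)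

theory Defs
  imports Complex_Main "HOL-Library.Multiset" "HOL-Combinatorics.Permutations" "HOL-Combinatorics.Orbits"
begin

text \<open>A complex algebra structure on a unital ring 'a: a unital ring homomorphism
  iota from the complex numbers into the centre of 'a; scalar multiplication is
  z . a = iota z * a.\<close>
definition complex_algebra_str :: "(complex \<Rightarrow> 'a::ring_1) \<Rightarrow> bool" where
  "complex_algebra_str \<iota> \<longleftrightarrow>
     \<iota> 1 = 1 \<and> (\<forall>z w. \<iota> (z + w) = \<iota> z + \<iota> w) \<and> (\<forall>z w. \<iota> (z * w) = \<iota> z * \<iota> w)
     \<and> (\<forall>z a. \<iota> z * a = a * \<iota> z)"

inductive_set commutator_span :: "(complex \<Rightarrow> 'a::ring_1) \<Rightarrow> 'a set" for \<iota> where
  zero: "0 \<in> commutator_span \<iota>"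
| comm: "h * h' - h' * h \<in> commutator_span \<iota>"
| add: "a \<in> commutator_span \<iota> \<Longrightarrow> b \<in> commutator_span \<iota> \<Longrightarrow> a + b \<in> commutator_span \<iota>"
| smult: "a \<in> commutator_span \<iota> \<Longrightarrow> \<iota> z * a \<in> commutator_span \<iota>"

text \<open>Defining relations of the degenerate affine Hecke-Clifford algebra of type A_{n-1}
  with parameter u, realised inside a complex algebra 'a: generators x i, c i (1 \<le> i \<le> n)
  and the image T sigma of each permutation sigma of {1..n}.\<close>
definition hecke_clifford_rel ::
  "nat \<Rightarrow> complex \<Rightarrow> (complex \<Rightarrow> 'a::ring_1) \<Rightarrow> (nat \<Rightarrow> 'a) \<Rightarrow> (nat \<Rightarrow> 'a) \<Rightarrow> ((nat \<Rightarrow> nat) \<Rightarrow> 'a) \<Rightarrow> bool"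
where
  "hecke_clifford_rel n u \<iota> x c T \<longleftrightarrow>
     (\<forall>i\<in>{1..n}. \<forall>j\<in>{1..n}. x i * x j = x j * x i)
   \<and> (\<forall>i\<in>{1..n}. c i * c i = 1)
   \<and> (\<forall>i\<in>{1..n}. \<forall>j\<in>{1..n}. i \<noteq> j \<longrightarrow> c i * c j = - (c j * c i))
   \<and> T id = 1
   \<and> (\<forall>\<sigma> \<tau>. \<sigma> permutes {1..n} \<longrightarrow> \<tau> permutes {1..n} \<longrightarrow> T (\<sigma> \<circ> \<tau>) = T \<sigma> * T \<tau>)
   \<and> (\<forall>i\<in>{1..n}. x i * c i = - (c i * x i))
   \<and> (\<forall>i\<in>{1..n}. \<forall>j\<in>{1..n}. i \<noteq> j \<longrightarrow> x i * c j = c j * x i)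
   \<and> (\<forall>\<sigma>. \<sigma> permutes {1..n} \<longrightarrow> (\<forall>i\<in>{1..n}. T \<sigma> * c i = c (\<sigma> i) * T \<sigma>))
   \<and> (\<forall>i. 1 \<le> i \<and> i < n \<longrightarrow>
        x (i+1) * T (transpose i (i+1)) - T (transpose i (i+1)) * x i
          = \<iota> u * (1 - c (i+1) * c i))
   \<and> (\<forall>i. 1 \<le> i \<and> i < n \<longrightarrow> (\<forall>j\<in>{1..n}. j \<noteq> i \<and> j \<noteq> i+1 \<longrightarrow>
        x j * T (transpose i (i+1)) = T (transpose i (i+1)) * x j))"

definition cycle_type :: "nat \<Rightarrow> (nat \<Rightarrow> nat) \<Rightarrow> nat multiset" where
  "cycle_type n w = image_mset card (mset_set ((\<lambda>i. orbit w i) ` {1..n}))"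

definition is_partition :: "nat multiset \<Rightarrow> nat \<Rightarrow> bool" where
  "is_partition lam n \<longleftrightarrow> sum_mset lam = n \<and> (\<forall>p\<in>#lam. p > 0)"

end

theory Submission
  imports Defs
begin

(* Let (a_1 ... a_m) be a cycle of w of even length m and C = c_{a_1} ... c_{a_m}.
   Conjugation by T w permutes the factors of C cyclically, and moving c_{a_1} back to the
   front past the m - 1 other, anticommuting, factors costs the sign (-1)^(m-1) = -1.
   Hence T w anticommutes with the unit C, so [T w * C, C^-1] = 2 T w, and T w lies in
   the commutator span because 2 is invertible in the scalars. *)

lemma prod_list_map_mult_rev_eq_one:
  fixes c :: "'b \<Rightarrow> 'a::ring_1"
  assumes "\<forall>a\<in>set L. c a * c a = 1"
  shows "prod_list (map c L) * prod_list (map c (rev L)) = 1"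
  using assms
proof (induction L)
  case (Cons a L)
  have "prod_list (map c (a # L)) * prod_list (map c (rev (a # L)))
        = c a * (prod_list (map c L) * prod_list (map c (rev L))) * c a"
    by (simp add: mult.assoc)
  with Cons show ?case by simp
qed simp

lemma mult_prod_list_map_anticommute:
  fixes c :: "'b \<Rightarrow> 'a::ring_1"
  assumes "\<forall>a\<in>set L. y * c a = - (c a * y)"
  shows "y * prod_list (map c L) = (-1) ^ length L * (prod_list (map c L) * y)"
  using assms
proof (induction L)
  case (Cons a L)
  have "y * prod_list (map c (a # L)) = (y * c a) * prod_list (map c L)"
    by (simp add: mult.assoc)
  also have "\<dots> = - (c a * (y * prod_list (map c L)))"
    using Cons.prems by (simp add: mult.assoc)
  finally have "y * prod_list (map c (a # L)) = - (c a * (y * prod_list (map c L)))" .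
  with Cons show ?case by (cases "even (length L)") (simp_all add: mult.assoc)
qed simp

lemma mult_prod_list_map_intertwine:
  fixes c :: "'b \<Rightarrow> 'a::ring_1"
  assumes "\<forall>a\<in>set L. t * c a = c (w a) * t"
  shows "t * prod_list (map c L) = prod_list (map c (map w L)) * t"
  using assms
proof (induction L)
  case (Cons a L)
  have "t * prod_list (map c (a # L)) = (t * c a) * prod_list (map c L)"
    by (simp add: mult.assoc)
  also have "\<dots> = c (w a) * (t * prod_list (map c L))"
    using Cons.prems by (simp add: mult.assoc)
  finally show ?case using Cons by (simp add: mult.assoc)
qed simp

definition orbit_list :: "('b \<Rightarrow> 'b) \<Rightarrow> 'b \<Rightarrow> 'b list" where
  "orbit_list w i = map (\<lambda>k. (w ^^ k) i) [0..<funpow_dist1 w i i]"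

lemma permutes_self_in_orbit:
  assumes "w permutes S" and "finite S"
  shows "i \<in> orbit w i"
  using assms permutation_permutes by (blast intro: permutation_self_in_orbit)

lemma orbit_list_Cons:
  "orbit_list w i = i # map (\<lambda>k. (w ^^ k) i) [1..<funpow_dist1 w i i]"
  unfolding orbit_list_def by (simp add: upt_conv_Cons del: upt_Suc)

lemma set_orbit_list:
  assumes "i \<in> orbit w i"
  shows "set (orbit_list w i) = orbit w i"
  unfolding orbit_list_def orbit_conv_funpow_dist1[OF assms] by (simp del: upt_Suc)

lemma distinct_orbit_list:
  assumes "i \<in> orbit w i"
  shows "distinct (orbit_list w i)"
  unfolding orbit_list_def distinct_map using inj_on_funpow_dist1[OF assms] by (simp del: upt_Suc)

lemma map_orbit_list:
  assumes "i \<in> orbit w i"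
  shows "map w (orbit_list w i) = rotate1 (orbit_list w i)"
proof -
  let ?m = "funpow_dist1 w i i"
  have "map w (orbit_list w i) = map (\<lambda>k. (w ^^ k) i) [1..<Suc ?m]"
    unfolding orbit_list_def by (simp add: map_Suc_upt[symmetric] del: upt_Suc)
  also have "\<dots> = map (\<lambda>k. (w ^^ k) i) [1..<?m] @ [i]"
    using funpow_dist1_prop[OF assms] by simp
  also have "\<dots> = rotate1 (orbit_list w i)"
    by (simp add: orbit_list_Cons)
  finally show ?thesis .
qed

lemma anticommutes_prod_list_orbit_list:
  fixes c :: "'b \<Rightarrow> 'a::ring_1"
  assumes self: "i \<in> orbit w i" and even: "even (card (orbit w i))"
    and intertwine: "\<And>a. a \<in> orbit w i \<Longrightarrow> t * c a = c (w a) * t"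
    and anticomm: "\<And>a b. a \<in> orbit w i \<Longrightarrow> b \<in> orbit w i \<Longrightarrow> a \<noteq> b \<Longrightarrow>
      c a * c b = - (c b * c a)"
  shows "t * prod_list (map c (orbit_list w i)) = - (prod_list (map c (orbit_list w i)) * t)"
proof -
  obtain D where L: "orbit_list w i = i # D"
    by (rule that[OF orbit_list_Cons])
  have distinct: "distinct (i # D)" and set_L: "set (i # D) = orbit w i"
    using distinct_orbit_list[OF self] set_orbit_list[OF self] unfolding L .
  have "length (i # D) = card (orbit w i)"
    using distinct_card[OF distinct] set_L by simp
  then have "odd (length D)"
    using even by (metis even_Suc length_Cons)
  moreover have "\<forall>a\<in>set D. c i * c a = - (c a * c i)"
  proof
    fix a assume "a \<in> set D"
    then have "a \<in> orbit w i" and "a \<noteq> i"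
      using set_L distinct by auto
    then show "c i * c a = - (c a * c i)"
      using anticomm[OF self] by simp
  qed
  ultimately have swap: "prod_list (map c D) * c i = - (c i * prod_list (map c D))"
    using mult_prod_list_map_anticommute[of D "c i" c] by simp
  have "t * prod_list (map c (orbit_list w i)) = prod_list (map c (map w (orbit_list w i))) * t"
    by (rule mult_prod_list_map_intertwine) (simp add: intertwine set_orbit_list[OF self])
  also have "map w (orbit_list w i) = rotate1 (i # D)"
    using map_orbit_list[OF self] L by simp
  also have "prod_list (map c (rotate1 (i # D))) * t = - (c i * prod_list (map c D) * t)"
    by (simp add: swap)
  finally show ?thesis
    by (simp add: L mult.assoc)
qed

lemma commutator_span_half:
  assumes "complex_algebra_str \<iota>" and "t + t \<in> commutator_span \<iota>"
  shows "t \<in> commutator_span \<iota>"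
proof -
  note \<iota> = assms(1)[unfolded complex_algebra_str_def]
  have "\<iota> (1/2) * (t + t) = (\<iota> (1/2) + \<iota> (1/2)) * t"
    by (simp only: distrib_left distrib_right)
  also have "\<iota> (1/2) + \<iota> (1/2) = \<iota> (1/2 + 1/2)"
    using \<iota> by metis
  finally have "\<iota> (1/2) * (t + t) = t"
    using \<iota> by simp
  then show ?thesis
    using commutator_span.smult[OF assms(2), of "1/2"] by simp
qed

lemma anticommutes_unit_in_commutator_span:
  assumes "complex_algebra_str \<iota>"
    and "e * f = 1" and "f * e = 1" and "t * e = - (e * t)"
  shows "t \<in> commutator_span \<iota>"
proof -
  have "(t * e) * f = t"
    using assms(2) by (simp add: mult.assoc)
  moreover have "f * (t * e) = - t"
  proof -
    have "f * (t * e) = - ((f * e) * t)"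
      using assms(4) by (simp add: mult.assoc)
    then show ?thesis
      using assms(3) by simp
  qed
  ultimately have "(t * e) * f - f * (t * e) = t + t"
    by simp
  then have "t + t \<in> commutator_span \<iota>"
    using commutator_span.comm[of "t * e" f \<iota>] by simp
  then show ?thesis
    by (rule commutator_span_half[OF assms(1)])
qed

lemma cycle_type_obtains_orbit:
  assumes "p \<in># cycle_type n w"
  obtains i where "i \<in> {1..n}" and "card (orbit w i) = p"
proof -
  have "p \<in> card ` orbit w ` {1..n}"
    using assms unfolding cycle_type_def
    by (simp only: set_image_mset finite_set_mset_mset_set finite_imageI finite_atLeastAtMost)
  then show ?thesis
    using that by blast
qed

lemma hecke_clifford_rel_T_anticommutes_orbit_product:
  assumes rel: "hecke_clifford_rel n u \<iota> x c T" and w: "w permutes {1..n}"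
    and i: "i \<in> {1..n}" and even: "even (card (orbit w i))"
  shows "T w * prod_list (map c (orbit_list w i)) = - (prod_list (map c (orbit_list w i)) * T w)"
proof (rule anticommutes_prod_list_orbit_list[OF _ even])
  note rel = rel[unfolded hecke_clifford_rel_def]
  have c_anticomm: "\<forall>a\<in>{1..n}. \<forall>b\<in>{1..n}. a \<noteq> b \<longrightarrow> c a * c b = - (c b * c a)"
    using rel by (elim conjE) assumption
  have T_c: "\<forall>\<sigma>. \<sigma> permutes {1..n} \<longrightarrow> (\<forall>a\<in>{1..n}. T \<sigma> * c a = c (\<sigma> a) * T \<sigma>)"
    using rel by (elim conjE) assumption
  have orbit: "orbit w i \<subseteq> {1..n}"
    using permutes_orbit_subset[OF w i] .
  show "i \<in> orbit w i"
    using permutes_self_in_orbit[OF w] by simp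
  show "T w * c a = c (w a) * T w" if "a \<in> orbit w i" for a
    using T_c w orbit that by auto
  show "c a * c b = - (c b * c a)" if "a \<in> orbit w i" "b \<in> orbit w i" "a \<noteq> b" for a b
    using c_anticomm orbit that by auto
qed

theorem proposition3p3p1:
  fixes n :: nat and u :: complex and \<iota> :: "complex \<Rightarrow> 'a::ring_1"
    and x c :: "nat \<Rightarrow> 'a" and T :: "(nat \<Rightarrow> nat) \<Rightarrow> 'a"
    and lam :: "nat multiset" and w :: "nat \<Rightarrow> nat"
  assumes "complex_algebra_str \<iota>"
    and "hecke_clifford_rel n u \<iota> x c T"
    and "is_partition lam n"
    and "\<exists>p\<in>#lam. even p"
    and "w permutes {1..n}"
    and "cycle_type n w = lam"
  shows "T w \<in> commutator_span \<iota>"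
proof -
  obtain i where i: "i \<in> {1..n}" and even: "even (card (orbit w i))"
    using assms(4,6) cycle_type_obtains_orbit by metis
  have self: "i \<in> orbit w i"
    using permutes_self_in_orbit[OF assms(5)] by simp
  define C where "C = prod_list (map c (orbit_list w i))"
  define R where "R = prod_list (map c (rev (orbit_list w i)))"
  have "\<forall>a\<in>{1..n}. c a * c a = 1"
    using assms(2) unfolding hecke_clifford_rel_def by (elim conjE) assumption
  then have involution: "\<forall>a\<in>set (orbit_list w i). c a * c a = 1"
    using permutes_orbit_subset[OF assms(5) i] unfolding set_orbit_list[OF self] by auto
  have "C * R = 1" and "R * C = 1"
    unfolding C_def R_def
    using prod_list_map_mult_rev_eq_one[of _ c] involution by (metis set_rev rev_rev_ident)+
  moreover have "T w * C = - (C * T w)"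
    unfolding C_def using hecke_clifford_rel_T_anticommutes_orbit_product[OF assms(2,5) i even] .
  ultimately show ?thesis
    using anticommutes_unit_in_commutator_span[OF assms(1)] by blast
qed

end
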